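(* Let $m,\ell\ge 2$. If $\sigma_1\in\mathcal{S}_{m,1}^{1\prec m}(1324)$ and $\sigma_2\in\mathcal{S}_{\ell,k}^{1\prec \ell}(1324)$ for some $k\ge1$, then $\sigma_1\odot\sigma_2\in\mathcal{S}_{n,k+1}^{1\prec n}(1324)$, where $n=\ell+m-1$.
   Context: $\mathcal{S}_n(1324)$ denotes the set of permutations of $\{1,\dots,n\}$ (in one-line notation) avoiding the pattern $1324$. For $a,k\ge1$, $\mathcal{S}_{n,k}^{a\prec n}(1324)$ is the set of $\sigma\in\mathcal{S}_n(1324)$ with $\sigma^{-1}(n)-\sigma^{-1}(a)=k$ and $\sigma^{-1}(b)>\sigma^{-1}(n)$ for all $b\in\{1,\dots,a-1\}$. Elements of $\mathcal{S}_{m,1}^{1\prec m}(1324)$ are called primitives; such a permutation has the form $\sigma_1=\pi_1\,1\,m\,\tau_1$ with words $\pi_1,\tau_1$ (possibly empty). Given a primitive $\sigma_1=\pi_1\,1\,m\,\tau_1$ of size $m$ and a permutation $\sigma_2\in\mathcal{S}_\ell(1324)$ of the form $\sigma_2=\pi_2\,1\,\theta_2\,\ell\,\tau_2$ (words $\pi_2,\theta_2,\tau_2$ possibly empty, so $1$ is to the left of $\ell$), the product is $\sigma_1\odot\sigma_2=\widehat{\pi}_2\,\pi_1\,1\,m\,\widehat{\theta}_2\,n\,\widehat{\tau}_2\,\tau_1$, where $n=\ell+m-1$ and $\widehat{\pi}_2,\widehat{\theta}_2,\widehat{\tau}_2$ are obtained from $\pi_2,\theta_2,\tau_2$ by adding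 $m-1$ to each entry. For example $2143\odot 41253=7214586 3$. *)

theory Defs
  imports Main
begin

definition perm_list :: "nat \<Rightarrow> nat list \<Rightarrow> bool" where
  "perm_list n \<sigma> \<longleftrightarrow> distinct \<sigma> \<and> set \<sigma> = {1..n}"

definition avoids_1324 :: "nat list \<Rightarrow> bool" where
  "avoids_1324 \<sigma> \<longleftrightarrow> \<not> (\<exists>i j k l. i < j \<and> j < k \<and> k < l \<and> l < length \<sigma> \<and>
      \<sigma>!i < \<sigma>!k \<and> \<sigma>!k < \<sigma>!j \<and> \<sigma>!j < \<sigma>!l)"

text \<open>Position (0-based) of an entry; only differences/comparisons of positions are used.\<close>
definition pos :: "nat list \<Rightarrow> nat \<Rightarrow> nat" where
  "pos \<sigma> x = (THE i. i < length \<sigma> \<and> \<sigma>!i = x)"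

definition S_prec :: "nat \<Rightarrow> nat \<Rightarrow> nat \<Rightarrow> nat list set" where
  "S_prec n k a = {\<sigma>. perm_list n \<sigma> \<and> avoids_1324 \<sigma> \<and>
      pos \<sigma> n = pos \<sigma> a + k \<and> (\<forall>b\<in>{1..<a}. pos \<sigma> b > pos \<sigma> n)}"

definition shift :: "nat \<Rightarrow> nat list \<Rightarrow> nat list" where
  "shift c w = map (\<lambda>x. x + c) w"

definition odot :: "nat list \<Rightarrow> nat list \<Rightarrow> nat list" where
  "odot \<sigma>1 \<sigma>2 =
    (let m = length \<sigma>1; l = length \<sigma>2; n = l + m - 1;
         p1 = pos \<sigma>1 1; q1 = pos \<sigma>2 1; ql = pos \<sigma>2 l;
         \<pi>1 = take p1 \<sigma>1; \<tau>1 = drop (p1 + 2) \<sigma>1;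
         \<pi>2 = take q1 \<sigma>2; \<theta>2 = take (ql - q1 - 1) (drop (q1 + 1) \<sigma>2);
         \<tau>2 = drop (ql + 1) \<sigma>2
     in shift (m - 1) \<pi>2 @ \<pi>1 @ [1, m] @ shift (m - 1) \<theta>2 @ [n] @ shift (m - 1) \<tau>2 @ \<tau>1)"

lemma pos_nth: "distinct xs \<Longrightarrow> i < length xs \<Longrightarrow> pos xs (xs!i) = i"
  unfolding pos_def by (rule the_equality) (auto simp: nth_eq_iff_index_eq)

lemma "odot [2,1,4,3] [4,1,2,5,3] = [7,2,1,4,5,8,6,3]"
proof -
  have a: "pos [2,1,4,3] 1 = 1" using pos_nth[of "[2,1,4,3::nat]" 1] by simp
  have b: "pos [4,1,2,5,3] 1 = 1" using pos_nth[of "[4,1,2,5,3::nat]" 1] by simp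
  have c: "pos [4,1,2,5,3] (length [4,1,2,5,3::nat]) = 3" using pos_nth[of "[4,1,2,5,3::nat]" 3] by (simp add: eval_nat_numeral)
  show ?thesis unfolding odot_def Let_def shift_def by (simp only: a b c) simp
qed

end

theory Submission
  imports Defs
begin

text \<open>
  In \<open>\<sigma>1 \<odot> \<sigma>2\<close> the letters at most \<open>m\<close> spell \<open>\<sigma>1\<close>, and the letters at least \<open>m\<close> spell
  \<open>\<sigma>2\<close> with \<open>1\<close> relabelled to \<open>m\<close> and all other letters shifted up by \<open>m - 1\<close>; both words
  avoid 1324. Since the adjacent factor \<open>1 m\<close> of \<open>\<sigma>1\<close> sits exactly where the \<open>1\<close> of \<open>\<sigma>2\<close>
  was, every large letter to the right of \<open>m\<close> precedes every small letter to the right of \<open>m\<close>.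
  Hence an occurrence of 1324 that mixes small and large letters could be moved onto \<open>m\<close>
  and would then lie entirely in one of the two words. The distance from \<open>1\<close> to \<open>n\<close> grows by
  one because \<open>m\<close> is inserted between them.
\<close>

definition is_1324_at :: "nat list \<Rightarrow> nat \<Rightarrow> nat \<Rightarrow> nat \<Rightarrow> nat \<Rightarrow> bool" where
  "is_1324_at \<sigma> i j k l \<longleftrightarrow> i < j \<and> j < k \<and> k < l \<and> l < length \<sigma> \<and>
      \<sigma>!i < \<sigma>!k \<and> \<sigma>!k < \<sigma>!j \<and> \<sigma>!j < \<sigma>!l"

lemma avoids_1324_iff: "avoids_1324 \<sigma> \<longleftrightarrow> (\<forall>i j k l. \<not> is_1324_at \<sigma> i j k l)"
  unfolding avoids_1324_def is_1324_at_def by blast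

lemma nth_filter_length_filter_take:
  assumes "i < length xs" "Q (xs!i)"
  shows "filter Q xs ! length (filter Q (take i xs)) = xs!i"
proof -
  have "xs = take i xs @ xs!i # drop (Suc i) xs" using assms(1) by (rule id_take_nth_drop)
  then have "filter Q xs = filter Q (take i xs) @ xs!i # filter Q (drop (Suc i) xs)"
    using assms(2) by (metis filter.simps(2) filter_append)
  then show ?thesis by (simp add: nth_append)
qed

lemma length_filter_take_less:
  assumes "i < j" "j \<le> length xs" "Q (xs!i)"
  shows "length (filter Q (take i xs)) < length (filter Q (take j xs))"
proof -
  have "take j xs = take i (take j xs) @ take j xs ! i # drop (Suc i) (take j xs)"
    using assms(1,2) by (intro id_take_nth_drop) simp
  also have "\<dots> = take i xs @ xs!i # drop (Suc i) (take j xs)"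
    using assms(1) by simp
  finally obtain r where "take j xs = take i xs @ xs!i # r" ..
  then show ?thesis using assms(3) by simp
qed

lemma is_1324_at_filter:
  assumes "is_1324_at xs i j k l" and "Q (xs!i)" "Q (xs!j)" "Q (xs!k)" "Q (xs!l)"
  shows "\<not> avoids_1324 (filter Q xs)"
proof -
  define g where "g t = length (filter Q (take t xs))" for t
  have ord: "i < j" "j < k" "k < l" "l < length xs"
    using assms(1) unfolding is_1324_at_def by auto
  have "g i < g j" "g j < g k" "g k < g l"
    using ord assms(2-5) length_filter_take_less[of _ _ xs Q] unfolding g_def by simp_all
  moreover have "g l < length (filter Q xs)"
    using length_filter_take_less[of l "length xs" xs Q] ord assms(5) unfolding g_def by simp
  moreover have "filter Q xs ! g t = xs ! t" if "t < length xs" "Q (xs!t)" for t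
    using nth_filter_length_filter_take[of t xs Q, OF that] unfolding g_def .
  ultimately have "is_1324_at (filter Q xs) (g i) (g j) (g k) (g l)"
    using assms ord unfolding is_1324_at_def g_def by simp
  then show ?thesis unfolding avoids_1324_iff by blast
qed

lemma avoids_1324_map:
  assumes "avoids_1324 xs" and "\<And>x y. x \<in> set xs \<Longrightarrow> y \<in> set xs \<Longrightarrow> f x < f y \<longleftrightarrow> x < y"
  shows "avoids_1324 (map f xs)"
  unfolding avoids_1324_iff
proof (intro allI notI)
  fix i j k l assume "is_1324_at (map f xs) i j k l"
  then have "i < length xs" "j < length xs" "k < length xs" "l < length xs"
    unfolding is_1324_at_def by auto
  with \<open>is_1324_at (map f xs) i j k l\<close> have "is_1324_at xs i j k l"
    using assms(2)[OF nth_mem nth_mem] unfolding is_1324_at_def by simp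
  then show False using assms(1) unfolding avoids_1324_iff by blast
qed

lemma avoids_1324_splice:
  fixes A B C E :: "nat list"
  assumes A: "\<forall>x\<in>set A. m < x" and B: "\<forall>x\<in>set B. x < m"
    and C: "\<forall>x\<in>set C. m < x" and E: "\<forall>x\<in>set E. x < m"
    and low: "avoids_1324 (B @ m # E)" and high: "avoids_1324 (A @ m # C)"
  shows "avoids_1324 (A @ B @ m # C @ E)"
  unfolding avoids_1324_iff
proof (intro allI notI)
  define P where "P = A @ B @ m # C @ E"
  define s where "s = length A + length B"
  fix i j k l assume "is_1324_at (A @ B @ m # C @ E) i j k l"
  \<comment> \<open>Position \<open>s\<close> holds \<open>m\<close>; a mixed occurrence is turned into one through \<open>s\<close>.\<close>
  then have occ: "is_1324_at P i j k l" unfolding P_def .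
  have region: "(t < length A \<or> s < t \<and> t \<le> s + length C) \<and> m < P!t
       \<or> (length A \<le> t \<and> t < s \<or> s + length C < t) \<and> P!t < m
       \<or> t = s \<and> P!t = m" if "t < length P" for t
    using that A B C E unfolding P_def s_def
    by (auto simp: nth_append nth_Cons' split: if_splits)
  have "filter (\<lambda>x. x \<le> m) A = []" "filter (\<lambda>x. x \<le> m) B = B"
    "filter (\<lambda>x. x \<le> m) C = []" "filter (\<lambda>x. x \<le> m) E = E"
    using A B C E by (auto simp: filter_empty_conv filter_id_conv)
  then have filter_low: "filter (\<lambda>x. x \<le> m) P = B @ m # E" unfolding P_def by simp
  have "filter (\<lambda>x. m \<le> x) A = A" "filter (\<lambda>x. m \<le> x) B = []"
    "filter (\<lambda>x. m \<le> x) C = C" "filter (\<lambda>x. m \<le> x) E = []"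
    using A B C E by (auto simp: filter_empty_conv filter_id_conv)
  then have filter_high: "filter (\<lambda>x. m \<le> x) P = A @ m # C" unfolding P_def by simp
  have "length A \<le> s" "s < length P" "P!s = m" unfolding P_def s_def by (simp_all add: nth_append)
  have ord: "i < j" "j < k" "k < l" "l < length P"
    and val: "P!i < P!k" "P!k < P!j" "P!j < P!l"
    using occ unfolding is_1324_at_def by auto
  show False
  proof (cases "m \<le> P!i")
    case True
    have "\<not> avoids_1324 (filter (\<lambda>x. m \<le> x) P)"
      by (rule is_1324_at_filter[OF occ]) (use True val in auto)
    then show False using high filter_high by simp
  next
    case i_low: False
    show False
    proof (cases "P!l \<le> m")
      case True
      have "\<not> avoids_1324 (filter (\<lambda>x. x \<le> m) P)"
        by (rule is_1324_at_filter[OF occ]) (use True val in auto)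
      then show False using low filter_low by simp
    next
      case False
      then have i: "length A \<le> i \<and> i < s" and l: "s < l \<and> l \<le> s + length C"
        using i_low region[of i] region[of l] ord \<open>length A \<le> s\<close> by auto
      show False
      proof (cases "m < P!j")
        case True
        then have "s < j" using region[of j] i ord by auto
        then have "m < P!k" using region[of k] l ord by auto
        have "is_1324_at P s j k l"
          using \<open>s < j\<close> \<open>m < P!k\<close> \<open>P!s = m\<close> ord val unfolding is_1324_at_def by auto
        then have "\<not> avoids_1324 (filter (\<lambda>x. m \<le> x) P)"
          by (rule is_1324_at_filter) (use \<open>P!s = m\<close> \<open>m < P!k\<close> val in auto)
        then show False using high filter_high by simp
      next
        case False
        then have "k < s" and "P!j < m" using region[of j] region[of k] l ord val by auto
        have "is_1324_at P i j k s"
          using \<open>k < s\<close> \<open>P!j < m\<close> \<open>P!s = m\<close> ord val \<open>s < length P\<close> unfolding is_1324_at_def by auto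
        then have "\<not> avoids_1324 (filter (\<lambda>x. x \<le> m) P)"
          by (rule is_1324_at_filter) (use \<open>P!s = m\<close> \<open>P!j < m\<close> val in auto)
        then show False using low filter_low by simp
      qed
    qed
  qed
qed

lemma distinct_splice:
  fixes A B C E :: "nat list"
  assumes "\<forall>x\<in>set A. m < x" "\<forall>x\<in>set B. x < m" "\<forall>x\<in>set C. m < x" "\<forall>x\<in>set E. x < m"
    and "distinct (B @ m # E)" "distinct (A @ m # C)"
  shows "distinct (A @ B @ m # C @ E)"
proof -
  have "x \<noteq> y" if "x \<in> set A \<union> set C" "y \<in> set B \<union> set E" for x y
    using that assms(1-4) by fastforce
  then show ?thesis using assms(5,6) by (simp add: disjoint_iff) blast
qed

lemma split_at_two_positions:
  assumes "i < j" "j < length xs"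
  shows "xs = take i xs @ xs!i # take (j - Suc i) (drop (Suc i) xs) @ xs!j # drop (Suc j) xs"
proof -
  have "drop (Suc i) xs = take (j - Suc i) (drop (Suc i) xs) @ xs!j # drop (Suc j) xs"
    using id_take_nth_drop[of "j - Suc i" "drop (Suc i) xs"] assms by simp
  then show ?thesis using id_take_nth_drop[of i xs] assms by simp
qed

lemma perm_list_length: "perm_list n \<sigma> \<Longrightarrow> length \<sigma> = n"
  unfolding perm_list_def by (metis card_atLeastAtMost diff_Suc_1 distinct_card)

lemma perm_list_nth_pos:
  assumes "perm_list n \<sigma>" "x \<in> {1..n}"
  shows "pos \<sigma> x < n" "\<sigma> ! pos \<sigma> x = x"
proof -
  have "x \<in> set \<sigma>" "distinct \<sigma>" using assms unfolding perm_list_def by simp_all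
  then obtain i where "i < length \<sigma>" "\<sigma>!i = x" "pos \<sigma> x = i"
    by (metis in_set_conv_nth pos_nth)
  then show "pos \<sigma> x < n" "\<sigma> ! pos \<sigma> x = x" using perm_list_length[OF assms(1)] by simp_all
qed

lemma S_prec_1_split:
  assumes "\<sigma> \<in> S_prec n k 1" "1 \<le> n" "1 \<le> k"
  shows "\<sigma> = take (pos \<sigma> 1) \<sigma> @ 1 # take (k - 1) (drop (Suc (pos \<sigma> 1)) \<sigma>) @ n # drop (Suc (pos \<sigma> n)) \<sigma>"
    and "pos \<sigma> n = pos \<sigma> 1 + k" "pos \<sigma> n < n"
proof -
  have perm: "perm_list n \<sigma>" and "pos \<sigma> n = pos \<sigma> 1 + k"
    using assms(1) unfolding S_prec_def by auto
  then show "pos \<sigma> n = pos \<sigma> 1 + k" "pos \<sigma> n < n"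
    using perm_list_nth_pos(1)[OF perm, of n] assms(2) by simp_all
  then have "\<sigma> = take (pos \<sigma> 1) \<sigma> @ \<sigma> ! pos \<sigma> 1 # take (pos \<sigma> n - Suc (pos \<sigma> 1)) (drop (Suc (pos \<sigma> 1)) \<sigma>)
      @ \<sigma> ! pos \<sigma> n # drop (Suc (pos \<sigma> n)) \<sigma>"
    using assms(3) perm_list_length[OF perm] by (intro split_at_two_positions) simp_all
  moreover have "\<sigma> ! pos \<sigma> 1 = 1" "\<sigma> ! pos \<sigma> n = n"
    using perm_list_nth_pos(2)[OF perm] assms(2) by simp_all
  moreover have "pos \<sigma> n - Suc (pos \<sigma> 1) = k - 1"
    using \<open>pos \<sigma> n = pos \<sigma> 1 + k\<close> by simp
  ultimately show "\<sigma> = take (pos \<sigma> 1) \<sigma> @ 1 # take (k - 1) (drop (Suc (pos \<sigma> 1)) \<sigma>) @ n # drop (Suc (pos \<sigma> n)) \<sigma>"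
    by (simp only:)
qed

lemma perm_list_split_bounds:
  assumes "perm_list n (X @ 1 # Y @ n # Z)"
  shows "\<forall>x \<in> set X \<union> set Y \<union> set Z. 1 < x \<and> x < n"
proof -
  have "set X \<union> set Y \<union> set Z \<subseteq> {1..n}" "1 \<notin> set X \<union> set Y \<union> set Z" "n \<notin> set X \<union> set Y \<union> set Z"
    using assms unfolding perm_list_def by auto
  then show ?thesis by (metis atLeastAtMost_iff le_neq_implies_less subsetD)
qed

text \<open>The relabelling of \<open>\<sigma>2\<close> inside \<open>\<sigma>1 \<odot> \<sigma>2\<close>: its entry \<open>1\<close> is identified with the
  entry \<open>m\<close> of \<open>\<sigma>1\<close>.\<close>
definition lift :: "nat \<Rightarrow> nat \<Rightarrow> nat" where
  "lift m x = (if x = 1 then m else x + (m - 1))"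

lemma lift_less_iff: "1 \<le> x \<Longrightarrow> 1 \<le> y \<Longrightarrow> lift m x < lift m y \<longleftrightarrow> x < y"
  unfolding lift_def by auto

lemma atLeastAtMost_Un_image_lift:
  assumes "1 \<le> m" "1 \<le> l"
  shows "{1..m} \<union> lift m ` {1..l} = {1..l + m - 1}"
proof
  show "{1..m} \<union> lift m ` {1..l} \<subseteq> {1..l + m - 1}" using assms unfolding lift_def by auto
  show "{1..l + m - 1} \<subseteq> {1..m} \<union> lift m ` {1..l}"
  proof
    fix x assume x: "x \<in> {1..l + m - 1}"
    show "x \<in> {1..m} \<union> lift m ` {1..l}"
    proof (cases "x \<le> m")
      case False
      then have "x = lift m (x - (m - 1))" "x - (m - 1) \<in> {1..l}" using x assms unfolding lift_def by auto
      then show ?thesis by blast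
    qed (use x in auto)
  qed
qed

lemma odot_split:
  assumes \<sigma>1: "\<sigma>1 \<in> S_prec m 1 1" and \<sigma>2: "\<sigma>2 \<in> S_prec l k 1"
    and "1 \<le> m" "1 \<le> l" "1 \<le> k"
  obtains \<pi>1 \<tau>1 \<pi>2 \<theta>2 \<tau>2 where "\<sigma>1 = \<pi>1 @ 1 # m # \<tau>1" "\<sigma>2 = \<pi>2 @ 1 # \<theta>2 @ l # \<tau>2"
    "odot \<sigma>1 \<sigma>2 = shift (m - 1) \<pi>2 @ \<pi>1 @ 1 # m # shift (m - 1) \<theta>2 @ (l + m - 1) # shift (m - 1) \<tau>2 @ \<tau>1"
    "length \<theta>2 + 1 = k"
proof
  have "length \<sigma>1 = m" "length \<sigma>2 = l"
    using \<sigma>1 \<sigma>2 perm_list_length unfolding S_prec_def by blast+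
  then show "length (take (k - 1) (drop (Suc (pos \<sigma>2 1)) \<sigma>2)) + 1 = k"
    using S_prec_1_split(2,3)[OF \<sigma>2] assms(4,5) by simp
  from \<open>length \<sigma>1 = m\<close> \<open>length \<sigma>2 = l\<close> show "odot \<sigma>1 \<sigma>2 = shift (m - 1) (take (pos \<sigma>2 1) \<sigma>2) @ take (pos \<sigma>1 1) \<sigma>1 @ 1 # m #
      shift (m - 1) (take (k - 1) (drop (Suc (pos \<sigma>2 1)) \<sigma>2)) @ (l + m - 1) #
      shift (m - 1) (drop (Suc (pos \<sigma>2 l)) \<sigma>2) @ drop (Suc (pos \<sigma>1 m)) \<sigma>1"
    using S_prec_1_split(2)[OF \<sigma>1] S_prec_1_split(2)[OF \<sigma>2] assms(3-5)
    unfolding odot_def Let_def by simp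
  show "\<sigma>1 = take (pos \<sigma>1 1) \<sigma>1 @ 1 # m # drop (Suc (pos \<sigma>1 m)) \<sigma>1"
    using S_prec_1_split(1)[OF \<sigma>1] assms(3) by simp
  show "\<sigma>2 = take (pos \<sigma>2 1) \<sigma>2 @ 1 # take (k - 1) (drop (Suc (pos \<sigma>2 1)) \<sigma>2) @ l #
      drop (Suc (pos \<sigma>2 l)) \<sigma>2"
    using S_prec_1_split(1)[OF \<sigma>2] assms(4,5) .
qed

lemma pos_split_two:
  assumes "distinct (X @ a # Y @ b # Z)"
  shows "pos (X @ a # Y @ b # Z) a = length X" "pos (X @ a # Y @ b # Z) b = length X + length Y + 1"
  using pos_nth[OF assms, of "length X"] pos_nth[OF assms, of "length X + length Y + 1"]
  by (simp_all add: nth_append)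

lemma shift_greater: "\<forall>x\<in>set X. 1 < x \<Longrightarrow> \<forall>x\<in>set (shift (m - 1) X). m < x"
  unfolding shift_def by auto

lemma map_lift_split:
  assumes "\<forall>x\<in>set X \<union> set Y \<union> set Z. 1 < x" "1 < l" "1 \<le> m"
  shows "map (lift m) (X @ 1 # Y @ l # Z) = shift (m - 1) X @ m # shift (m - 1) Y @ (l + m - 1) # shift (m - 1) Z"
proof -
  have "map (lift m) W = shift (m - 1) W" if "\<forall>x\<in>set W. 1 < x" for W
    using that unfolding shift_def map_eq_conv by (auto simp: lift_def)
  then show ?thesis using assms unfolding lift_def by simp
qed

lemma avoids_1324_map_lift: "perm_list l \<sigma> \<Longrightarrow> avoids_1324 \<sigma> \<Longrightarrow> avoids_1324 (map (lift m) \<sigma>)"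
  by (rule avoids_1324_map) (auto simp: perm_list_def lift_less_iff)

lemma distinct_map_lift:
  assumes "perm_list l \<sigma>"
  shows "distinct (map (lift m) \<sigma>)"
proof -
  have "inj_on (lift m) (set \<sigma>)"
  proof (rule linorder_inj_onI)
    fix x y assume "x < y" "x \<in> set \<sigma>" "y \<in> set \<sigma>"
    then show "lift m x \<noteq> lift m y" using assms lift_less_iff[of x y m] unfolding perm_list_def by auto
  qed auto
  then show ?thesis using assms unfolding perm_list_def by (simp add: distinct_map)
qed

lemma odot_splice:
  assumes \<sigma>1: "\<sigma>1 \<in> S_prec m 1 1" and \<sigma>2: "\<sigma>2 \<in> S_prec l k 1"
    and "2 \<le> m" "2 \<le> l" "1 \<le> k"
  obtains A B C E where "\<sigma>1 = B @ m # E" "map (lift m) \<sigma>2 = A @ m # C"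
    "odot \<sigma>1 \<sigma>2 = A @ B @ m # C @ E"
    "\<forall>x\<in>set A. m < x" "\<forall>x\<in>set B. x < m" "\<forall>x\<in>set C. m < x" "\<forall>x\<in>set E. x < m"
    and "\<exists>X Y Z. odot \<sigma>1 \<sigma>2 = X @ 1 # Y @ (l + m - 1) # Z \<and> length Y = k"
proof -
  obtain \<pi>1 \<tau>1 \<pi>2 \<theta>2 \<tau>2 where split1: "\<sigma>1 = \<pi>1 @ 1 # m # \<tau>1"
    and split2: "\<sigma>2 = \<pi>2 @ 1 # \<theta>2 @ l # \<tau>2"
    and odot: "odot \<sigma>1 \<sigma>2 = shift (m - 1) \<pi>2 @ \<pi>1 @ 1 # m # shift (m - 1) \<theta>2 @ (l + m - 1) #
      shift (m - 1) \<tau>2 @ \<tau>1"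
    and k: "length \<theta>2 + 1 = k"
    by (rule odot_split[OF \<sigma>1 \<sigma>2]) (use assms(3-5) in simp_all)
  have perm1: "perm_list m \<sigma>1" and perm2: "perm_list l \<sigma>2"
    using \<sigma>1 \<sigma>2 unfolding S_prec_def by auto
  have bounds1: "\<forall>x\<in>set \<pi>1 \<union> set \<tau>1. 1 < x \<and> x < m"
    using perm_list_split_bounds[of m \<pi>1 "[]"] perm1 unfolding split1 by simp
  have bounds2: "\<forall>x\<in>set \<pi>2 \<union> set \<theta>2 \<union> set \<tau>2. 1 < x"
    using perm_list_split_bounds[of l \<pi>2 \<theta>2] perm2 unfolding split2 by blast
  show thesis
  proof
    show "\<sigma>1 = (\<pi>1 @ [1]) @ m # \<tau>1" unfolding split1 by simp
    show "map (lift m) \<sigma>2 = shift (m - 1) \<pi>2 @ m # (shift (m - 1) \<theta>2 @ (l + m - 1) # shift (m - 1) \<tau>2)"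
      using map_lift_split[OF bounds2] assms(3,4) unfolding split2 by simp
    show "odot \<sigma>1 \<sigma>2 = shift (m - 1) \<pi>2 @ (\<pi>1 @ [1]) @ m # (shift (m - 1) \<theta>2 @ (l + m - 1) #
        shift (m - 1) \<tau>2) @ \<tau>1"
      unfolding odot by simp
    show "\<forall>x\<in>set (shift (m - 1) \<pi>2). m < x" "\<forall>x\<in>set (\<pi>1 @ [1]). x < m"
      "\<forall>x\<in>set (shift (m - 1) \<theta>2 @ (l + m - 1) # shift (m - 1) \<tau>2). m < x" "\<forall>x\<in>set \<tau>1. x < m"
      using shift_greater[of _ m] bounds1 bounds2 assms(3,4) by auto
    have "odot \<sigma>1 \<sigma>2 = (shift (m - 1) \<pi>2 @ \<pi>1) @ 1 # (m # shift (m - 1) \<theta>2) @ (l + m - 1) #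
        (shift (m - 1) \<tau>2 @ \<tau>1)" "length (m # shift (m - 1) \<theta>2) = k"
      using k unfolding odot shift_def by simp_all
    then show "\<exists>X Y Z. odot \<sigma>1 \<sigma>2 = X @ 1 # Y @ (l + m - 1) # Z \<and> length Y = k" by blast
  qed
qed

theorem mainTheorem2:
  fixes m l k :: nat and \<sigma>1 \<sigma>2 :: "nat list"
  assumes "m \<ge> 2" and "l \<ge> 2" and "k \<ge> 1"
    and "\<sigma>1 \<in> S_prec m 1 1"
    and "\<sigma>2 \<in> S_prec l k 1"
  shows "odot \<sigma>1 \<sigma>2 \<in> S_prec (l + m - 1) (k + 1) 1"
proof -
  obtain A B C E where low: "\<sigma>1 = B @ m # E" and high: "map (lift m) \<sigma>2 = A @ m # C"
    and splice: "odot \<sigma>1 \<sigma>2 = A @ B @ m # C @ E"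
    and separated: "\<forall>x\<in>set A. m < x" "\<forall>x\<in>set B. x < m" "\<forall>x\<in>set C. m < x" "\<forall>x\<in>set E. x < m"
    and shape: "\<exists>X Y Z. odot \<sigma>1 \<sigma>2 = X @ 1 # Y @ (l + m - 1) # Z \<and> length Y = k"
    by (rule odot_splice[OF assms(4,5,1-3)])
  have perm1: "perm_list m \<sigma>1" and perm2: "perm_list l \<sigma>2"
    and av1: "avoids_1324 \<sigma>1" and av2: "avoids_1324 \<sigma>2"
    using assms(4,5) unfolding S_prec_def by auto
  have avoid: "avoids_1324 (odot \<sigma>1 \<sigma>2)" unfolding splice
    by (rule avoids_1324_splice[OF separated, folded low high])
      (use av1 avoids_1324_map_lift[OF perm2 av2] in simp_all)
  have dist: "distinct (odot \<sigma>1 \<sigma>2)" unfolding splice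
    by (rule distinct_splice[OF separated, folded low high])
      (use perm1 distinct_map_lift[OF perm2] in \<open>simp_all add: perm_list_def\<close>)
  have "set (odot \<sigma>1 \<sigma>2) = set (B @ m # E) \<union> set (A @ m # C)"
    unfolding splice by auto
  then have "set (odot \<sigma>1 \<sigma>2) = set \<sigma>1 \<union> lift m ` set \<sigma>2"
    by (simp only: low[symmetric] high[symmetric] set_map)
  then have set: "set (odot \<sigma>1 \<sigma>2) = {1..l + m - 1}"
    using perm1 perm2 atLeastAtMost_Un_image_lift assms(1,2) unfolding perm_list_def by simp
  have "pos (odot \<sigma>1 \<sigma>2) (l + m - 1) = pos (odot \<sigma>1 \<sigma>2) 1 + (k + 1)"
    using shape pos_split_two dist by force
  then show ?thesis using avoid dist set unfolding S_prec_def perm_list_def by simp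
qed

end
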